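(* Let $\{\mathbb{G}_n,\ n=2,3,\ldots\}$ be a sequence of random graphs as described in the context, with $\lim_{n\to\infty}|V_n|=\infty$, and assume that for each $n$, $D_{n,k}$ has the same distribution as $D_{n,1}$ for all $k\in V_n$, and for all distinct $k,\ell\in V_n$, $(D_{n,k},D_{n,\ell})$ has the same joint distribution as $(D_{n,1},D_{n,2})$. Assume that for every $d=0,1,\ldots$ there exists a scalar $L(d)$ such that $P_n(d)\to L(d)$ in probability as $n\to\infty$. If the values $\{L(d),\ d=0,1,\ldots\}$ constitute a pmf $p=(p(d),\ d=0,1,\ldots)$ on $\mathbb{N}$ (i.e. $p(d)=L(d)$), then: (i) there exists an $\mathbb{N}$-valued random variable $D$ with pmf $p$ such that $D_{n,1}\to D$ in distribution; and (ii) for each $d=0,1,\ldots$, $\lim_{n\to\infty}\mathrm{Cov}\big[\mathbf{1}[D_{n,1}=d],\mathbf{1}[D_{n,2}=d]\big]=0$.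
   Context: All random variables are defined on a common probability space $(\Omega,\mathcal{F},\mathbb{P})$. For each $n=2,3,\ldots$, $\mathbb{G}_n$ is a random (possibly directed, self-loops allowed) graph on the deterministic finite node set $V_n=\{1,\ldots,k_n\}$ with $k_n\ge 2$, determined by $\{0,1\}$-valued edge random variables $\{\chi_n(k,\ell),\ k,\ell\in V_n\}$ ($\chi_n(k,\ell)=1$ iff there is an edge from $k$ to $\ell$). The degree of node $k$ is $D_{n,k}=\sum_{\ell\in V_n}\chi_n(k,\ell)$. For $d=0,1,\ldots$, $N_n(d)=\sum_{k\in V_n}\mathbf{1}[D_{n,k}=d]$ and $P_n(d)=N_n(d)/|V_n|$. $\mathbb{N}=\{0,1,2,\ldots\}$. *)

theory Defs
  imports "HOL-Probability.Probability"
begin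

definition nodes :: "(nat \<Rightarrow> nat) \<Rightarrow> nat \<Rightarrow> nat set" where
  "nodes kn n = {1..kn n}"

definition degree :: "(nat \<Rightarrow> nat) \<Rightarrow> (nat \<Rightarrow> nat \<Rightarrow> nat \<Rightarrow> 'a \<Rightarrow> bool) \<Rightarrow> nat \<Rightarrow> nat \<Rightarrow> 'a \<Rightarrow> nat" where
  "degree kn chi n k \<omega> = (\<Sum>l\<in>nodes kn n. if chi n k l \<omega> then 1 else 0)"

definition deg_count :: "(nat \<Rightarrow> nat) \<Rightarrow> (nat \<Rightarrow> nat \<Rightarrow> nat \<Rightarrow> 'a \<Rightarrow> bool) \<Rightarrow> nat \<Rightarrow> nat \<Rightarrow> 'a \<Rightarrow> nat" where
  "deg_count kn chi n d \<omega> = (\<Sum>k\<in>nodes kn n. if degree kn chi n k \<omega> = d then 1 else 0)"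

definition deg_freq :: "(nat \<Rightarrow> nat) \<Rightarrow> (nat \<Rightarrow> nat \<Rightarrow> nat \<Rightarrow> 'a \<Rightarrow> bool) \<Rightarrow> nat \<Rightarrow> nat \<Rightarrow> 'a \<Rightarrow> real" where
  "deg_freq kn chi n d \<omega> = real (deg_count kn chi n d \<omega>) / real (card (nodes kn n))"

definition covariance :: "'a measure \<Rightarrow> ('a \<Rightarrow> real) \<Rightarrow> ('a \<Rightarrow> real) \<Rightarrow> real" where
  "covariance M X Y =
     prob_space.expectation M (\<lambda>\<omega>. (X \<omega> - prob_space.expectation M X) * (Y \<omega> - prob_space.expectation M Y))"

definition conv_in_prob :: "'a measure \<Rightarrow> (nat \<Rightarrow> 'a \<Rightarrow> real) \<Rightarrow> real \<Rightarrow> bool" where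
  "conv_in_prob M X c \<longleftrightarrow>
     (\<forall>\<epsilon>>0. (\<lambda>n. measure M {\<omega>\<in>space M. \<bar>X n \<omega> - c\<bar> > \<epsilon>}) \<longlonglongrightarrow> 0)"

end

theory Submission
  imports Defs
begin

text \<open>By exchangeability, the mean of the degree frequency \<open>P\<^sub>n(d)\<close> is \<open>P(D\<^sub>n\<^sub>,\<^sub>1 = d)\<close> and its
  second moment is \<open>P(D\<^sub>n\<^sub>,\<^sub>1 = d)/|V\<^sub>n| + (1 - 1/|V\<^sub>n|) P(D\<^sub>n\<^sub>,\<^sub>1 = d, D\<^sub>n\<^sub>,\<^sub>2 = d)\<close>.
  Since \<open>P\<^sub>n(d)\<close> is bounded, convergence in probability to \<open>L(d)\<close> carries over to the first two
  moments, so \<open>P(D\<^sub>n\<^sub>,\<^sub>1 = d) \<rightarrow> L(d)\<close> and \<open>P(D\<^sub>n\<^sub>,\<^sub>1 = d, D\<^sub>n\<^sub>,\<^sub>2 = d) \<rightarrow> L(d)\<^sup>2\<close>; the covariance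
  of the two indicators is the difference of these. Pointwise convergence of the pmf of \<open>D\<^sub>n\<^sub>,\<^sub>1\<close>
  gives convergence of its distribution function, which only sums finitely many point masses.\<close>

lemma (in prob_space) abs_expectation_le_threshold:
  fixes Y :: "'a \<Rightarrow> real"
  assumes meas: "Y \<in> borel_measurable M"
    and bnd: "\<And>\<omega>. \<omega> \<in> space M \<Longrightarrow> \<bar>Y \<omega>\<bar> \<le> B" and eps: "\<epsilon> > 0"
  shows "\<bar>expectation Y\<bar> \<le> \<epsilon> + B * prob {\<omega>\<in>space M. \<bar>Y \<omega>\<bar> > \<epsilon>}"
proof -
  let ?A = "{\<omega>\<in>space M. \<bar>Y \<omega>\<bar> > \<epsilon>}"
  have A: "?A \<in> events" using meas by measurable
  have int_abs: "integrable M (\<lambda>\<omega>. \<bar>Y \<omega>\<bar>)"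
    by (rule integrable_const_bound[where B=B]) (use meas in \<open>auto intro!: AE_I2 bnd\<close>)
  have int_ind: "integrable M (\<lambda>\<omega>. B * indicator ?A \<omega>)"
    using A by (intro integrable_mult_right integrable_real_indicator) (auto simp: emeasure_eq_measure)
  have "\<bar>expectation Y\<bar> \<le> expectation (\<lambda>\<omega>. \<bar>Y \<omega>\<bar>)"
    using integral_norm_bound[of M Y] by simp
  also have "\<dots> \<le> expectation (\<lambda>\<omega>. \<epsilon> + B * indicator ?A \<omega>)"
  proof (rule integral_mono[OF int_abs])
    show "integrable M (\<lambda>\<omega>. \<epsilon> + B * indicator ?A \<omega>)" using int_ind by simp
    show "\<bar>Y \<omega>\<bar> \<le> \<epsilon> + B * indicator ?A \<omega>" if "\<omega> \<in> space M" for \<omega>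
      using bnd[OF that] eps that by (auto simp: indicator_def)
  qed
  also have "\<dots> = \<epsilon> + B * prob ?A"
    using A int_ind by (simp add: prob_space Int_absorb2 sets.sets_into_space)
  finally show ?thesis .
qed

lemma (in prob_space) tendsto_expectation_conv_in_prob:
  fixes X :: "nat \<Rightarrow> 'a \<Rightarrow> real"
  assumes meas: "eventually (\<lambda>n. X n \<in> borel_measurable M) sequentially"
    and bnd: "eventually (\<lambda>n. \<forall>\<omega>\<in>space M. \<bar>X n \<omega> - c\<bar> \<le> B) sequentially"
    and conv: "conv_in_prob M X c"
  shows "(\<lambda>n. expectation (X n)) \<longlonglongrightarrow> c"
proof (rule tendstoI)
  fix e :: real assume e: "e > 0"
  define \<delta> where "\<delta> = e / (2 * (\<bar>B\<bar> + 1))"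
  have "\<delta> > 0" "e/2 > 0" using e by (simp_all add: \<delta>_def add_pos_nonneg)
  moreover have "(\<lambda>n. prob {\<omega>\<in>space M. \<bar>X n \<omega> - c\<bar> > e/2}) \<longlonglongrightarrow> 0"
    using conv \<open>e/2 > 0\<close> unfolding conv_in_prob_def by blast
  ultimately have small: "eventually (\<lambda>n. prob {\<omega>\<in>space M. \<bar>X n \<omega> - c\<bar> > e/2} < \<delta>) sequentially"
    by (auto dest: order_tendstoD(2))
  show "eventually (\<lambda>n. dist (expectation (X n)) c < e) sequentially"
    using small meas bnd
  proof eventually_elim
    case (elim n)
    let ?p = "prob {\<omega>\<in>space M. \<bar>X n \<omega> - c\<bar> > e/2}"
    have "integrable M (X n)"
      by (rule integrable_const_bound[where B="\<bar>c\<bar> + B"]) (use elim in \<open>auto intro!: AE_I2\<close>)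
    then have "expectation (X n) - c = expectation (\<lambda>\<omega>. X n \<omega> - c)"
      by (simp add: prob_space)
    moreover have "\<bar>expectation (\<lambda>\<omega>. X n \<omega> - c)\<bar> \<le> e/2 + B * ?p"
      by (rule abs_expectation_le_threshold) (use elim e in auto)
    moreover have "B * ?p \<le> (\<bar>B\<bar> + 1) * ?p"
      by (intro mult_right_mono) auto
    moreover have "(\<bar>B\<bar> + 1) * ?p < e/2"
      using elim(1) by (simp add: \<delta>_def field_simps add_pos_nonneg)
    ultimately show ?case by (simp add: dist_real_def)
  qed
qed

lemma (in prob_space) conv_in_prob_power2:
  fixes X :: "nat \<Rightarrow> 'a \<Rightarrow> real"
  assumes meas: "eventually (\<lambda>n. X n \<in> borel_measurable M) sequentially"
    and bnd: "\<And>n \<omega>. \<bar>X n \<omega>\<bar> \<le> B"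
    and conv: "conv_in_prob M X c"
  shows "conv_in_prob M (\<lambda>n \<omega>. (X n \<omega>)\<^sup>2) (c\<^sup>2)"
  unfolding conv_in_prob_def
proof (intro allI impI)
  fix e :: real assume e: "e > 0"
  define C where "C = B + \<bar>c\<bar> + 1"
  have C: "C > 0" using bnd[of 0 undefined] by (simp add: C_def add_nonneg_pos)
  have "e / C > 0" using e C by simp
  then have tail: "(\<lambda>n. prob {\<omega>\<in>space M. \<bar>X n \<omega> - c\<bar> > e / C}) \<longlonglongrightarrow> 0"
    using conv unfolding conv_in_prob_def by simp
  have sub: "{\<omega>\<in>space M. \<bar>(X n \<omega>)\<^sup>2 - c\<^sup>2\<bar> > e} \<subseteq> {\<omega>\<in>space M. \<bar>X n \<omega> - c\<bar> > e / C}" for n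
  proof safe
    fix \<omega> assume "\<omega> \<in> space M" and gt: "\<bar>(X n \<omega>)\<^sup>2 - c\<^sup>2\<bar> > e"
    have "\<bar>(X n \<omega>)\<^sup>2 - c\<^sup>2\<bar> = \<bar>X n \<omega> - c\<bar> * \<bar>X n \<omega> + c\<bar>"
      by (simp add: power2_eq_square abs_mult[symmetric] algebra_simps)
    also have "\<dots> \<le> \<bar>X n \<omega> - c\<bar> * C"
      using bnd[of n \<omega>] by (intro mult_left_mono) (auto simp: C_def)
    finally show "e / C < \<bar>X n \<omega> - c\<bar>"
      using gt C by (simp add: divide_less_eq)
  qed
  have "eventually (\<lambda>n. prob {\<omega>\<in>space M. \<bar>(X n \<omega>)\<^sup>2 - c\<^sup>2\<bar> > e}
      \<le> prob {\<omega>\<in>space M. \<bar>X n \<omega> - c\<bar> > e / C}) sequentially"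
    using meas
  proof eventually_elim
    case (elim n)
    then have "{\<omega>\<in>space M. \<bar>X n \<omega> - c\<bar> > e / C} \<in> events" by measurable
    then show ?case using sub by (rule finite_measure_mono[rotated])
  qed
  then show "(\<lambda>n. prob {\<omega>\<in>space M. \<bar>(X n \<omega>)\<^sup>2 - c\<^sup>2\<bar> > e}) \<longlonglongrightarrow> 0"
    by (intro tendsto_sandwich[OF _ _ tendsto_const tail]) auto
qed

lemma (in prob_space) integrable_pred_indicator:
  assumes "{\<omega>\<in>space M. Q \<omega>} \<in> events"
  shows "integrable M (\<lambda>\<omega>. if Q \<omega> then 1 else 0 :: real)"
proof -
  have "integrable M (indicator {\<omega>\<in>space M. Q \<omega>} :: 'a \<Rightarrow> real)"
    using assms by (simp add: emeasure_eq_measure)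
  also have "?this \<longleftrightarrow> ?thesis"
    by (rule Bochner_Integration.integrable_cong) (auto simp: indicator_def)
  finally show ?thesis .
qed

lemma (in prob_space) expectation_pred_indicator:
  assumes "{\<omega>\<in>space M. Q \<omega>} \<in> events"
  shows "expectation (\<lambda>\<omega>. if Q \<omega> then 1 else 0 :: real) = prob {\<omega>\<in>space M. Q \<omega>}"
proof -
  have "expectation (\<lambda>\<omega>. if Q \<omega> then 1 else 0 :: real) = expectation (indicator {\<omega>\<in>space M. Q \<omega>})"
    by (rule Bochner_Integration.integral_cong) (auto simp: indicator_def)
  then show ?thesis using assms by (simp add: Int_absorb2)
qed

lemma (in prob_space) covariance_pred_indicators:
  assumes Q: "{\<omega>\<in>space M. Q \<omega>} \<in> events" and R: "{\<omega>\<in>space M. R \<omega>} \<in> events"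
  shows "covariance M (\<lambda>\<omega>. if Q \<omega> then 1 else 0) (\<lambda>\<omega>. if R \<omega> then 1 else 0) =
    prob {\<omega>\<in>space M. Q \<omega> \<and> R \<omega>} - prob {\<omega>\<in>space M. Q \<omega>} * prob {\<omega>\<in>space M. R \<omega>}"
proof -
  let ?a = "prob {\<omega>\<in>space M. Q \<omega>}" and ?b = "prob {\<omega>\<in>space M. R \<omega>}"
  let ?X = "\<lambda>\<omega>. if Q \<omega> then 1 else 0 :: real" and ?Y = "\<lambda>\<omega>. if R \<omega> then 1 else 0 :: real"
  let ?J = "\<lambda>\<omega>. if Q \<omega> \<and> R \<omega> then 1 else 0 :: real"
  have "{\<omega>\<in>space M. Q \<omega> \<and> R \<omega>} = {\<omega>\<in>space M. Q \<omega>} \<inter> {\<omega>\<in>space M. R \<omega>}"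
    by auto
  then have QR: "{\<omega>\<in>space M. Q \<omega> \<and> R \<omega>} \<in> events"
    using Q R by simp
  have "(?X \<omega> - ?a) * (?Y \<omega> - ?b) = ?J \<omega> - ?b * ?X \<omega> - ?a * ?Y \<omega> + ?a * ?b" for \<omega>
    by (cases "Q \<omega>"; cases "R \<omega>") (simp_all add: algebra_simps)
  then have "covariance M ?X ?Y = expectation (\<lambda>\<omega>. ?J \<omega> - ?b * ?X \<omega> - ?a * ?Y \<omega> + ?a * ?b)"
    unfolding covariance_def expectation_pred_indicator[OF Q] expectation_pred_indicator[OF R] by simp
  also have "\<dots> = expectation ?J - ?b * expectation ?X - ?a * expectation ?Y + ?a * ?b"
    using Q R QR by (simp add: integrable_pred_indicator prob_space)
  also have "\<dots> = prob {\<omega>\<in>space M. Q \<omega> \<and> R \<omega>} - ?b * ?a - ?a * ?b + ?a * ?b"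
    using Q R QR by (simp only: expectation_pred_indicator)
  finally show ?thesis by simp
qed

lemma measure_eq_if_distr_eq:
  assumes "X \<in> measurable M (count_space UNIV)" "Y \<in> measurable M (count_space UNIV)"
    and "distr M (count_space UNIV) X = distr M (count_space UNIV) Y"
  shows "measure M {\<omega>\<in>space M. X \<omega> = x} = measure M {\<omega>\<in>space M. Y \<omega> = x}"
proof -
  have "measure M {\<omega>\<in>space M. Z \<omega> = x} = measure (distr M (count_space UNIV) Z) {x}"
    if "Z \<in> measurable M (count_space UNIV)" for Z :: "'a \<Rightarrow> 'b"
    using that by (subst measure_distr) (auto intro: arg_cong[where f="measure M"])
  then show ?thesis using assms by metis
qed

lemma measurable_degree:
  assumes "\<And>l. l \<in> nodes kn n \<Longrightarrow> chi n k l \<in> measurable M (count_space UNIV)"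
  shows "degree kn chi n k \<in> measurable M (count_space UNIV)"
proof -
  have "(\<lambda>\<omega>. if chi n k l \<omega> then 1 else 0 :: nat) \<in> borel_measurable M" if "l \<in> nodes kn n" for l
    using measurable_compose[OF assms[OF that], of "\<lambda>b. if b then 1 else 0" borel] by (simp add: o_def)
  then have "degree kn chi n k \<in> borel_measurable M"
    unfolding degree_def by (rule borel_measurable_sum)
  then show ?thesis
    using measurable_cong_sets[OF refl sets_borel_eq_count_space] by blast
qed

lemma (in prob_space) expectation_empirical_frequency:
  fixes D :: "'i \<Rightarrow> 'a \<Rightarrow> 'b"
  assumes V: "finite V" "i \<in> V"
    and meas: "\<And>k. k \<in> V \<Longrightarrow> D k \<in> measurable M (count_space UNIV)"
    and marg: "\<And>k. k \<in> V \<Longrightarrow> prob {\<omega>\<in>space M. D k \<omega> = d} = prob {\<omega>\<in>space M. D i \<omega> = d}"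
  shows "expectation (\<lambda>\<omega>. (\<Sum>k\<in>V. if D k \<omega> = d then 1 else 0) / real (card V)) =
    prob {\<omega>\<in>space M. D i \<omega> = d}"
proof -
  have ev: "{\<omega>\<in>space M. D k \<omega> = d} \<in> events" if "k \<in> V" for k
    using meas[OF that] by measurable
  have "expectation (\<lambda>\<omega>. (\<Sum>k\<in>V. if D k \<omega> = d then 1 else 0) / real (card V)) =
      (\<Sum>k\<in>V. expectation (\<lambda>\<omega>. if D k \<omega> = d then 1 else 0)) / real (card V)"
    using ev by (simp add: integrable_pred_indicator)
  also have "\<dots> = (\<Sum>k\<in>V. prob {\<omega>\<in>space M. D i \<omega> = d}) / real (card V)"
    using ev by (simp add: expectation_pred_indicator marg)
  also have "\<dots> = prob {\<omega>\<in>space M. D i \<omega> = d}"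
    using V by (auto simp: card_gt_0_iff)
  finally show ?thesis .
qed

lemma (in prob_space) expectation_empirical_frequency_power2:
  fixes D :: "'i \<Rightarrow> 'a \<Rightarrow> 'b"
  assumes V: "finite V" "i \<in> V" "j \<in> V" "i \<noteq> j"
    and meas: "\<And>k. k \<in> V \<Longrightarrow> D k \<in> measurable M (count_space UNIV)"
    and marg: "\<And>k. k \<in> V \<Longrightarrow> prob {\<omega>\<in>space M. D k \<omega> = d} = prob {\<omega>\<in>space M. D i \<omega> = d}"
    and joint: "\<And>k l. k \<in> V \<Longrightarrow> l \<in> V \<Longrightarrow> k \<noteq> l \<Longrightarrow>
      prob {\<omega>\<in>space M. D k \<omega> = d \<and> D l \<omega> = d} = prob {\<omega>\<in>space M. D i \<omega> = d \<and> D j \<omega> = d}"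
  shows "expectation (\<lambda>\<omega>. ((\<Sum>k\<in>V. if D k \<omega> = d then 1 else 0) / real (card V))\<^sup>2) =
    prob {\<omega>\<in>space M. D i \<omega> = d} / real (card V) +
    (real (card V) - 1) / real (card V) * prob {\<omega>\<in>space M. D i \<omega> = d \<and> D j \<omega> = d}"
proof -
  let ?a = "prob {\<omega>\<in>space M. D i \<omega> = d}" and ?b = "prob {\<omega>\<in>space M. D i \<omega> = d \<and> D j \<omega> = d}"
  let ?K = "real (card V)"
  let ?J = "\<lambda>k l \<omega>. if D k \<omega> = d \<and> D l \<omega> = d then 1 else 0 :: real"
  have "card {i, j} \<le> card V"
    using V by (intro card_mono) auto
  then have K: "card V \<ge> 2"
    using V by simp
  have ev: "{\<omega>\<in>space M. D k \<omega> = d \<and> D l \<omega> = d} \<in> events" if "k \<in> V" "l \<in> V" for k l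
    using meas[OF that(1)] meas[OF that(2)] by measurable
  have square: "((\<Sum>k\<in>V. if D k \<omega> = d then 1 else 0) / ?K)\<^sup>2 = (\<Sum>k\<in>V. \<Sum>l\<in>V. ?J k l \<omega>) / ?K\<^sup>2" for \<omega>
    by (simp add: power2_eq_square sum_product) (intro disjI2 sum.cong; simp)+
  have EJ: "expectation (?J k l) = (if k = l then ?a else ?b)" if "k \<in> V" "l \<in> V" for k l
    using that ev[OF that] by (simp add: expectation_pred_indicator marg joint)
  have row: "(\<Sum>l\<in>V. if k = l then ?a else ?b) = ?a + (?K - 1) * ?b" if "k \<in> V" for k
  proof -
    have "(\<Sum>l\<in>V. if k = l then ?a else ?b) = ?a + (\<Sum>l\<in>V - {k}. if k = l then ?a else ?b)"
      by (subst sum.remove[OF V(1) that]) simp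
    also have "(\<Sum>l\<in>V - {k}. if k = l then ?a else ?b) = (\<Sum>l\<in>V - {k}. ?b)"
      by (rule sum.cong) auto
    finally show ?thesis using V(1) that K by (simp add: of_nat_diff)
  qed
  have "expectation (\<lambda>\<omega>. ((\<Sum>k\<in>V. if D k \<omega> = d then 1 else 0) / ?K)\<^sup>2) =
      (\<Sum>k\<in>V. \<Sum>l\<in>V. expectation (?J k l)) / ?K\<^sup>2"
    using ev by (simp add: square integrable_pred_indicator)
  also have "\<dots> = (\<Sum>k\<in>V. ?a + (?K - 1) * ?b) / ?K\<^sup>2"
    by (simp add: EJ row cong: sum.cong)
  also have "\<dots> = ?a / ?K + (?K - 1) / ?K * ?b"
    using K by (simp add: power2_eq_square field_simps)
  finally show ?thesis .
qed

lemma (in prob_space) weak_conv_m_of_tendsto_prob_eq: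
  fixes X :: "nat \<Rightarrow> 'a \<Rightarrow> nat" and p :: "nat pmf"
  assumes meas: "eventually (\<lambda>n. X n \<in> measurable M (count_space UNIV)) sequentially"
    and lim: "\<And>d. (\<lambda>n. prob {\<omega>\<in>space M. X n \<omega> = d}) \<longlonglongrightarrow> pmf p d"
  shows "weak_conv_m (\<lambda>n. distr M borel (\<lambda>\<omega>. real (X n \<omega>))) (distr (measure_pmf p) borel real)"
  unfolding weak_conv_m_def weak_conv_def
proof (intro allI impI)
  fix x :: real
  define S where "S = {d::nat. real d \<le> x}"
  have "S \<subseteq> {..nat \<lceil>x\<rceil>}"
    unfolding S_def by (auto simp: le_nat_iff le_ceiling_iff)
  then have S: "finite S"
    by (rule finite_subset) simp
  have cdf_X: "cdf (distr M borel (\<lambda>\<omega>. real (X n \<omega>))) x = (\<Sum>d\<in>S. prob {\<omega>\<in>space M. X n \<omega> = d})"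
    if Xn: "X n \<in> measurable M (count_space UNIV)" for n
  proof -
    have "(\<lambda>\<omega>. real (X n \<omega>)) \<in> borel_measurable M"
      using measurable_compose[OF Xn, of real borel] by (simp add: o_def)
    then have "cdf (distr M borel (\<lambda>\<omega>. real (X n \<omega>))) x = prob {\<omega>\<in>space M. real (X n \<omega>) \<le> x}"
      unfolding cdf_def2 by (subst measure_distr) (auto intro: arg_cong[where f=prob])
    also have "{\<omega>\<in>space M. real (X n \<omega>) \<le> x} = (\<Union>d\<in>S. {\<omega>\<in>space M. X n \<omega> = d})"
      unfolding S_def by auto
    also have "prob \<dots> = (\<Sum>d\<in>S. prob {\<omega>\<in>space M. X n \<omega> = d})"
    proof (rule finite_measure_finite_Union[OF S])
      show "(\<lambda>d. {\<omega>\<in>space M. X n \<omega> = d}) ` S \<subseteq> events"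
        using Xn by auto
    qed (auto simp: disjoint_family_on_def)
    finally show ?thesis .
  qed
  have cdf_p: "cdf (distr (measure_pmf p) borel real) x = (\<Sum>d\<in>S. pmf p d)"
  proof -
    have "cdf (distr (measure_pmf p) borel real) x = measure p (real -` {..x} \<inter> space (measure_pmf p))"
      unfolding cdf_def2 by (rule measure_distr) auto
    also have "real -` {..x} \<inter> space (measure_pmf p) = S"
      unfolding S_def by auto
    finally show ?thesis
      using S by (simp add: measure_measure_pmf_finite)
  qed
  have "(\<lambda>n. \<Sum>d\<in>S. prob {\<omega>\<in>space M. X n \<omega> = d}) \<longlonglongrightarrow> (\<Sum>d\<in>S. pmf p d)"
    by (intro tendsto_sum lim)
  moreover have "eventually (\<lambda>n. (\<Sum>d\<in>S. prob {\<omega>\<in>space M. X n \<omega> = d}) =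
      cdf (distr M borel (\<lambda>\<omega>. real (X n \<omega>))) x) sequentially"
    using meas by eventually_elim (simp add: cdf_X)
  ultimately show "(\<lambda>n. cdf (distr M borel (\<lambda>\<omega>. real (X n \<omega>))) x) \<longlonglongrightarrow> cdf (distr (measure_pmf p) borel real) x"
    unfolding cdf_p by (rule Lim_transform_eventually)
qed

lemma pmf_embed_pmf_sums:
  fixes f :: "nat \<Rightarrow> real"
  assumes "\<And>d. f d \<ge> 0" and "f sums 1"
  shows "pmf (embed_pmf f) d = f d"
proof (rule pmf_embed_pmf)
  show "(\<integral>\<^sup>+x. ennreal (f x) \<partial>count_space UNIV) = 1"
    using suminf_ennreal_eq[OF assms] by (simp add: nn_integral_count_space_nat)
qed (use assms in simp)

lemma finite_nodes: "finite (nodes kn n)"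
  and card_nodes: "card (nodes kn n) = kn n"
  by (simp_all add: nodes_def)

lemma deg_freq_eq_frequency:
  "deg_freq kn chi n d =
    (\<lambda>\<omega>. (\<Sum>k\<in>nodes kn n. if degree kn chi n k \<omega> = d then 1 else 0) / real (card (nodes kn n)))"
  unfolding deg_freq_def deg_count_def by (simp add: of_nat_sum if_distrib cong: if_cong)

lemma abs_deg_freq_le_1: "\<bar>deg_freq kn chi n d \<omega>\<bar> \<le> 1"
proof -
  have "deg_count kn chi n d \<omega> \<le> (\<Sum>k\<in>nodes kn n. 1)"
    unfolding deg_count_def by (rule sum_mono) auto
  then show ?thesis
    unfolding deg_freq_def by (cases "card (nodes kn n) = 0") (auto simp: field_simps)
qed

locale exchangeable_degrees = prob_space M for M :: "'a measure" +
  fixes kn :: "nat \<Rightarrow> nat" and chi :: "nat \<Rightarrow> nat \<Rightarrow> nat \<Rightarrow> 'a \<Rightarrow> bool"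
  assumes kn_ge2: "\<And>n. n \<ge> 2 \<Longrightarrow> kn n \<ge> 2"
    and chi_rv: "\<And>n k l. n \<ge> 2 \<Longrightarrow> k \<in> nodes kn n \<Longrightarrow> l \<in> nodes kn n \<Longrightarrow>
      chi n k l \<in> measurable M (count_space UNIV)"
    and same_marg: "\<And>n k. n \<ge> 2 \<Longrightarrow> k \<in> nodes kn n \<Longrightarrow>
      distr M (count_space UNIV) (degree kn chi n k) = distr M (count_space UNIV) (degree kn chi n 1)"
    and same_joint: "\<And>n k l. n \<ge> 2 \<Longrightarrow> k \<in> nodes kn n \<Longrightarrow> l \<in> nodes kn n \<Longrightarrow> k \<noteq> l \<Longrightarrow>
      distr M (count_space UNIV) (\<lambda>\<omega>. (degree kn chi n k \<omega>, degree kn chi n l \<omega>)) =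
      distr M (count_space UNIV) (\<lambda>\<omega>. (degree kn chi n 1 \<omega>, degree kn chi n 2 \<omega>))"
begin

lemma one_in_nodes: "n \<ge> 2 \<Longrightarrow> 1 \<in> nodes kn n"
  and two_in_nodes: "n \<ge> 2 \<Longrightarrow> 2 \<in> nodes kn n"
  using kn_ge2[of n] by (auto simp: nodes_def)

lemma degree_measurable:
  "n \<ge> 2 \<Longrightarrow> k \<in> nodes kn n \<Longrightarrow> degree kn chi n k \<in> measurable M (count_space UNIV)"
  by (intro measurable_degree chi_rv)

lemma degree_pair_measurable:
  assumes "n \<ge> 2" "k \<in> nodes kn n" "l \<in> nodes kn n"
  shows "(\<lambda>\<omega>. (degree kn chi n k \<omega>, degree kn chi n l \<omega>)) \<in> measurable M (count_space UNIV)"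
  using measurable_Pair[OF degree_measurable[OF assms(1,2)] degree_measurable[OF assms(1,3)]]
  by (simp add: pair_measure_countable)

lemma prob_degree_eq:
  assumes "n \<ge> 2" "k \<in> nodes kn n"
  shows "prob {\<omega>\<in>space M. degree kn chi n k \<omega> = d} = prob {\<omega>\<in>space M. degree kn chi n 1 \<omega> = d}"
  using assms by (intro measure_eq_if_distr_eq same_marg degree_measurable one_in_nodes)

lemma prob_degree_pair_eq:
  assumes "n \<ge> 2" "k \<in> nodes kn n" "l \<in> nodes kn n" "k \<noteq> l"
  shows "prob {\<omega>\<in>space M. degree kn chi n k \<omega> = d \<and> degree kn chi n l \<omega> = d} =
    prob {\<omega>\<in>space M. degree kn chi n 1 \<omega> = d \<and> degree kn chi n 2 \<omega> = d}"
  using measure_eq_if_distr_eq[OF degree_pair_measurable[OF assms(1-3)]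
      degree_pair_measurable[OF assms(1) one_in_nodes two_in_nodes] same_joint, of "(d, d)"] assms
  by simp

lemma deg_freq_measurable: "n \<ge> 2 \<Longrightarrow> deg_freq kn chi n d \<in> borel_measurable M"
  unfolding deg_freq_eq_frequency
  by (intro borel_measurable_divide borel_measurable_sum borel_measurable_const) (use degree_measurable in measurable)

lemma expectation_deg_freq:
  "n \<ge> 2 \<Longrightarrow> expectation (deg_freq kn chi n d) = prob {\<omega>\<in>space M. degree kn chi n 1 \<omega> = d}"
  unfolding deg_freq_eq_frequency
  by (intro expectation_empirical_frequency finite_nodes degree_measurable prob_degree_eq one_in_nodes)

lemma expectation_deg_freq_power2:
  "n \<ge> 2 \<Longrightarrow> expectation (\<lambda>\<omega>. (deg_freq kn chi n d \<omega>)\<^sup>2) =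
    prob {\<omega>\<in>space M. degree kn chi n 1 \<omega> = d} / real (kn n) +
    (real (kn n) - 1) / real (kn n) * prob {\<omega>\<in>space M. degree kn chi n 1 \<omega> = d \<and> degree kn chi n 2 \<omega> = d}"
  unfolding deg_freq_eq_frequency card_nodes[symmetric]
  by (intro expectation_empirical_frequency_power2 finite_nodes one_in_nodes two_in_nodes degree_measurable
      prob_degree_eq prob_degree_pair_eq) auto

lemma covariance_degree_indicators:
  assumes "n \<ge> 2"
  shows "covariance M (\<lambda>\<omega>. if degree kn chi n 1 \<omega> = d then 1 else 0)
      (\<lambda>\<omega>. if degree kn chi n 2 \<omega> = d then 1 else 0) =
    prob {\<omega>\<in>space M. degree kn chi n 1 \<omega> = d \<and> degree kn chi n 2 \<omega> = d} -
    (prob {\<omega>\<in>space M. degree kn chi n 1 \<omega> = d})\<^sup>2"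
proof -
  have ev: "{\<omega>\<in>space M. degree kn chi n k \<omega> = d} \<in> events" if "k \<in> nodes kn n" for k
    using degree_measurable[OF assms that] by measurable
  show ?thesis
    using covariance_pred_indicators[OF ev[OF one_in_nodes[OF assms]] ev[OF two_in_nodes[OF assms]]]
      prob_degree_eq[OF assms two_in_nodes[OF assms]]
    by (simp add: power2_eq_square)
qed

lemma tendsto_prob_degree:
  assumes conv: "conv_in_prob M (\<lambda>n. deg_freq kn chi n d) c"
  shows "(\<lambda>n. prob {\<omega>\<in>space M. degree kn chi n 1 \<omega> = d}) \<longlonglongrightarrow> c"
proof -
  have "(\<lambda>n. expectation (deg_freq kn chi n d)) \<longlonglongrightarrow> c"
  proof (rule tendsto_expectation_conv_in_prob[OF _ _ conv, where B="1 + \<bar>c\<bar>"])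
    show "eventually (\<lambda>n. deg_freq kn chi n d \<in> borel_measurable M) sequentially"
      using eventually_ge_at_top[of 2] by eventually_elim (rule deg_freq_measurable)
    show "eventually (\<lambda>n. \<forall>\<omega>\<in>space M. \<bar>deg_freq kn chi n d \<omega> - c\<bar> \<le> 1 + \<bar>c\<bar>) sequentially"
    proof (intro always_eventually allI ballI)
      fix n \<omega>
      show "\<bar>deg_freq kn chi n d \<omega> - c\<bar> \<le> 1 + \<bar>c\<bar>"
        using abs_deg_freq_le_1[of kn chi n d \<omega>] by linarith
    qed
  qed
  moreover have "eventually (\<lambda>n. expectation (deg_freq kn chi n d) =
      prob {\<omega>\<in>space M. degree kn chi n 1 \<omega> = d}) sequentially"
    using eventually_ge_at_top[of 2] by eventually_elim (rule expectation_deg_freq)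
  ultimately show ?thesis by (rule Lim_transform_eventually)
qed

lemma tendsto_prob_degree_pair:
  assumes conv: "conv_in_prob M (\<lambda>n. deg_freq kn chi n d) c"
    and kn_lim: "filterlim kn at_top sequentially"
  shows "(\<lambda>n. prob {\<omega>\<in>space M. degree kn chi n 1 \<omega> = d \<and> degree kn chi n 2 \<omega> = d}) \<longlonglongrightarrow> c\<^sup>2"
proof -
  let ?a = "\<lambda>n. prob {\<omega>\<in>space M. degree kn chi n 1 \<omega> = d}"
  let ?E2 = "\<lambda>n. expectation (\<lambda>\<omega>. (deg_freq kn chi n d \<omega>)\<^sup>2)"
  have meas: "eventually (\<lambda>n. deg_freq kn chi n d \<in> borel_measurable M) sequentially"
    using eventually_ge_at_top[of 2] by eventually_elim (rule deg_freq_measurable)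
  have "?E2 \<longlonglongrightarrow> c\<^sup>2"
  proof (rule tendsto_expectation_conv_in_prob[where B="1 + c\<^sup>2"])
    show "eventually (\<lambda>n. (\<lambda>\<omega>. (deg_freq kn chi n d \<omega>)\<^sup>2) \<in> borel_measurable M) sequentially"
      using meas by eventually_elim simp
    show "eventually (\<lambda>n. \<forall>\<omega>\<in>space M. \<bar>(deg_freq kn chi n d \<omega>)\<^sup>2 - c\<^sup>2\<bar> \<le> 1 + c\<^sup>2) sequentially"
    proof (intro always_eventually allI ballI)
      fix n \<omega>
      have "(deg_freq kn chi n d \<omega>)\<^sup>2 \<le> 1"
        using abs_square_le_1 abs_deg_freq_le_1 by metis
      then show "\<bar>(deg_freq kn chi n d \<omega>)\<^sup>2 - c\<^sup>2\<bar> \<le> 1 + c\<^sup>2"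
        using zero_le_power2[of "deg_freq kn chi n d \<omega>"] zero_le_power2[of c] by linarith
    qed
    show "conv_in_prob M (\<lambda>n \<omega>. (deg_freq kn chi n d \<omega>)\<^sup>2) (c\<^sup>2)"
      using meas abs_deg_freq_le_1 conv by (rule conv_in_prob_power2)
  qed
  moreover have "(\<lambda>n. inverse (real (kn n))) \<longlonglongrightarrow> 0"
    by (intro tendsto_inverse_0_at_top filterlim_compose[OF filterlim_real_sequentially kn_lim])
  ultimately have "(\<lambda>n. (?E2 n - ?a n * inverse (real (kn n))) / (1 - inverse (real (kn n))))
      \<longlonglongrightarrow> (c\<^sup>2 - c * 0) / (1 - 0)"
    by (intro tendsto_intros tendsto_prob_degree[OF conv]) auto
  moreover have "eventually (\<lambda>n. (?E2 n - ?a n * inverse (real (kn n))) / (1 - inverse (real (kn n))) =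
      prob {\<omega>\<in>space M. degree kn chi n 1 \<omega> = d \<and> degree kn chi n 2 \<omega> = d}) sequentially"
    using eventually_ge_at_top[of 2]
  proof eventually_elim
    case (elim n)
    then have "real (kn n) \<ge> 2" using kn_ge2[of n] by simp
    then show ?case by (simp add: expectation_deg_freq_power2[OF elim] field_simps)
  qed
  ultimately show ?thesis by (simp add: Lim_transform_eventually)
qed


lemma weak_conv_m_degree:
  assumes "\<And>d. conv_in_prob M (\<lambda>n. deg_freq kn chi n d) (pmf p d)"
  shows "weak_conv_m (\<lambda>n. distr M borel (\<lambda>\<omega>. real (degree kn chi n 1 \<omega>))) (distr (measure_pmf p) borel real)"
proof (rule weak_conv_m_of_tendsto_prob_eq)
  show "eventually (\<lambda>n. degree kn chi n 1 \<in> measurable M (count_space UNIV)) sequentially"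
    using eventually_ge_at_top[of 2] by eventually_elim (intro degree_measurable one_in_nodes)
  show "(\<lambda>n. prob {\<omega>\<in>space M. degree kn chi n 1 \<omega> = d}) \<longlonglongrightarrow> pmf p d" for d
    by (rule tendsto_prob_degree[OF assms])
qed

lemma tendsto_covariance_degree_indicators:
  assumes conv: "conv_in_prob M (\<lambda>n. deg_freq kn chi n d) c"
    and kn_lim: "filterlim kn at_top sequentially"
  shows "(\<lambda>n. covariance M (\<lambda>\<omega>. if degree kn chi n 1 \<omega> = d then 1 else 0)
      (\<lambda>\<omega>. if degree kn chi n 2 \<omega> = d then 1 else 0)) \<longlonglongrightarrow> 0"
proof (rule Lim_transform_eventually)
  show "(\<lambda>n. prob {\<omega>\<in>space M. degree kn chi n 1 \<omega> = d \<and> degree kn chi n 2 \<omega> = d} -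
      (prob {\<omega>\<in>space M. degree kn chi n 1 \<omega> = d})\<^sup>2) \<longlonglongrightarrow> 0"
    using tendsto_diff[OF tendsto_prob_degree_pair[OF conv kn_lim]
        tendsto_power[OF tendsto_prob_degree[OF conv], of 2]]
    by simp
  show "eventually (\<lambda>n. prob {\<omega>\<in>space M. degree kn chi n 1 \<omega> = d \<and> degree kn chi n 2 \<omega> = d} -
      (prob {\<omega>\<in>space M. degree kn chi n 1 \<omega> = d})\<^sup>2 =
      covariance M (\<lambda>\<omega>. if degree kn chi n 1 \<omega> = d then 1 else 0)
        (\<lambda>\<omega>. if degree kn chi n 2 \<omega> = d then 1 else 0)) sequentially"
    using eventually_ge_at_top[of 2] by eventually_elim (rule covariance_degree_indicators[symmetric])
qed

end

theorem proposition3: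
  fixes M :: "'a measure"
    and kn :: "nat \<Rightarrow> nat"
    and chi :: "nat \<Rightarrow> nat \<Rightarrow> nat \<Rightarrow> 'a \<Rightarrow> bool"
    and L :: "nat \<Rightarrow> real"
  assumes prob: "prob_space M"
    and kn_ge2: "\<And>n. n \<ge> 2 \<Longrightarrow> kn n \<ge> 2"
    and kn_lim: "filterlim kn at_top sequentially"
    and chi_rv: "\<And>n k l. n \<ge> 2 \<Longrightarrow> k \<in> nodes kn n \<Longrightarrow> l \<in> nodes kn n \<Longrightarrow>
                   chi n k l \<in> measurable M (count_space UNIV)"
    and same_marg: "\<And>n k. n \<ge> 2 \<Longrightarrow> k \<in> nodes kn n \<Longrightarrow>
                   distr M (count_space UNIV) (degree kn chi n k) =
                   distr M (count_space UNIV) (degree kn chi n 1)"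
    and same_joint: "\<And>n k l. n \<ge> 2 \<Longrightarrow> k \<in> nodes kn n \<Longrightarrow> l \<in> nodes kn n \<Longrightarrow> k \<noteq> l \<Longrightarrow>
                   distr M (count_space UNIV) (\<lambda>\<omega>. (degree kn chi n k \<omega>, degree kn chi n l \<omega>)) =
                   distr M (count_space UNIV) (\<lambda>\<omega>. (degree kn chi n 1 \<omega>, degree kn chi n 2 \<omega>))"
    and conv: "\<And>d. conv_in_prob M (\<lambda>n. deg_freq kn chi n d) (L d)"
    and L_nonneg: "\<And>d. L d \<ge> 0"
    and L_sums: "L sums 1"
  shows "(\<exists>p :: nat pmf. (\<forall>d. pmf p d = L d) \<and>
            weak_conv_m (\<lambda>n. distr M borel (\<lambda>\<omega>. real (degree kn chi n 1 \<omega>)))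
                        (distr (measure_pmf p) borel real))
         \<and> (\<forall>d. (\<lambda>n. covariance M
                    (\<lambda>\<omega>. if degree kn chi n 1 \<omega> = d then 1 else 0)
                    (\<lambda>\<omega>. if degree kn chi n 2 \<omega> = d then 1 else 0)) \<longlonglongrightarrow> 0)"
proof -
  interpret exchangeable_degrees M kn chi
    using prob kn_ge2 chi_rv same_marg same_joint
    by (simp add: exchangeable_degrees_def exchangeable_degrees_axioms_def)
  have pmf_L: "pmf (embed_pmf L) d = L d" for d
    using L_nonneg L_sums by (rule pmf_embed_pmf_sums)
  then have "weak_conv_m (\<lambda>n. distr M borel (\<lambda>\<omega>. real (degree kn chi n 1 \<omega>)))
      (distr (measure_pmf (embed_pmf L)) borel real)"
    using conv by (intro weak_conv_m_degree) simp
  moreover have "(\<lambda>n. covariance M (\<lambda>\<omega>. if degree kn chi n 1 \<omega> = d then 1 else 0)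
      (\<lambda>\<omega>. if degree kn chi n 2 \<omega> = d then 1 else 0)) \<longlonglongrightarrow> 0" for d
    using conv kn_lim by (rule tendsto_covariance_degree_indicators)
  ultimately show ?thesis
    using pmf_L by blast
qed

end
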